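(* Let $C_k$ be the last (rightmost) column of the diagram of a composition $(c_1,\dots,c_k)$ of $n$, and let $\mathcal B_k$ be the set of root vectors $x_{i,j}$ with $j$ an entry of $C_k$ and $i$ not an entry of $C_k$ (the last column block of $\mathfrak m$). (i) For every pair $(C,C')$ of neighbouring columns with $C'\neq C_k$, one has $\mathcal B_k\subseteq\mathfrak u_{C,C'}$; hence $\mathcal B_k\subseteq\mathfrak u'$, where $\mathfrak u'$ is the intersection of the $\mathfrak u_{C,C'}$ over all neighbouring pairs $(C,C')$ with $C'\ne C_k$. (ii) If no other column of the diagram has height $c_k$, then $\mathcal B_k\subseteq\mathfrak u_{\pi'}$.
   Context: Let $n\ge 2$, $x_{i,j}$ the $n\times n$ matrix unit with $1$ in position $(i,j)$. A composition $(c_1,\dots,c_k)$ of $n$ determines the standard parabolic subalgebra of block upper triangular matrices with diagonal blocks of sizes $c_1,\dots,c_k$, whose nilradical $\mathfrak m$ is spanned by the $x_{i,j}$, $i<j$ in different blocks. Diagram and tableau: columns $C_1,\dots,C_k$ from left to right, $C_i$ having $c_i$ boxes in rows $R_1,\dots,R_{c_i}$ (rows numbered top to bottom), filled with $1,\dots,n$ so that $C_i$ contains $c_1+\dots+c_{i-1}+1,\dots,c_1+\dots+c_i$, increasing downwards. Two columns of the same height $s$ are neighbouring if no column of height $s$ lies strictly between them. Shifted tableau and $\mathfrak u_{C,C'}$: let $C$ (left) and $C'$ (right) be neighbouring columns of height $s$, and let $N$ be the largest entry of $C'$. Let $D_1,\dots,D_u$ ($u\ge 0$) be the columns of height $>s$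 strictly between $C$ and $C'$, left to right, and $D_0=C$. For a column $D$, let $D^{\le s}$ be the set of entries in its top $s$ boxes and $D^{>s}$ the remaining entries; put $D_{u+1}^{>s}:=\{N\}$. Replace, for $0\le i\le u$, the column $D_i$ by the column with entries $D_i^{\le s}\cup D_{i+1}^{>s}$; replace $C'$ by $C'$ with $N$ removed; leave other columns unchanged. Reading the new columns left to right, each from bottom to top, gives a word $w_{C,C'}$ (a permutation of $1,\dots,n$). $\mathfrak u_{C,C'}$ is the span of the $x_{i,j}$, $i<j$, such that $i$ occurs before $j$ in $w_{C,C'}$. Finally $\mathfrak u_{\pi'}$ is the intersection of the $\mathfrak u_{C,C'}$ over all pairs $(C,C')$ of neighbouring columns. *)

theory Defs
  imports Main
begin

text \<open>A composition is a list c of positive naturals; n = sum_list c.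
  Columns are indexed 0 .. length c - 1 (left to right); column j contains the
  entries c_1+...+c_j+1, ..., c_1+...+c_{j+1}, listed top to bottom (increasing).
  Root vectors x_{i,j} are represented by the index pairs (i,j) with 1 <= i, j <= n.\<close>

definition col :: "nat list \<Rightarrow> nat \<Rightarrow> nat list" where
  "col c j = [sum_list (take j c) + 1 ..< sum_list (take j c) + c ! j + 1]"

definition neighbouring :: "nat list \<Rightarrow> nat \<Rightarrow> nat \<Rightarrow> bool" where
  "neighbouring c a b \<longleftrightarrow> a < b \<and> b < length c \<and> c ! a = c ! b \<and>
     (\<forall>m. a < m \<and> m < b \<longrightarrow> c ! m \<noteq> c ! a)"

text \<open>New column at position j in the shifted tableau for the pair (a,b).
  The columns D_1,...,D_u are the m with a < m < b and height > s; D_0 = a.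
  For D_i, the successor D_{i+1} is the first such m beyond it (or the
  marker {N} if none).\<close>
definition newcol :: "nat list \<Rightarrow> nat \<Rightarrow> nat \<Rightarrow> nat \<Rightarrow> nat list" where
  "newcol c a b j =
    (let s = c ! a; N = last (col c b);
         nxt = filter (\<lambda>m. s < c ! m) [Suc j ..< b] in
     if j = b then butlast (col c b)
     else if j = a \<or> (a < j \<and> j < b \<and> s < c ! j) then
       (if nxt = [] then take s (col c j) @ [N]
        else take s (col c j) @ drop s (col c (hd nxt)))
     else col c j)"

text \<open>The word w_{C,C'}: new columns left to right, each read bottom to top.\<close>
definition word :: "nat list \<Rightarrow> nat \<Rightarrow> nat \<Rightarrow> nat list" where
  "word c a b = concat (map (\<lambda>j. rev (newcol c a b j)) [0 ..< length c])"

definition occurs_before :: "nat list \<Rightarrow> nat \<Rightarrow> nat \<Rightarrow> bool" where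
  "occurs_before w i j \<longleftrightarrow> (\<exists>p q. p < q \<and> q < length w \<and> w ! p = i \<and> w ! q = j)"

definition uCC :: "nat list \<Rightarrow> nat \<Rightarrow> nat \<Rightarrow> (nat \<times> nat) set" where
  "uCC c a b = {(i, j). 1 \<le> i \<and> i < j \<and> j \<le> sum_list c \<and> occurs_before (word c a b) i j}"

definition mroots :: "nat list \<Rightarrow> (nat \<times> nat) set" where
  "mroots c = {(i, j). 1 \<le> i \<and> i < j \<and> j \<le> sum_list c \<and>
                       (\<forall>t < length c. \<not> (i \<in> set (col c t) \<and> j \<in> set (col c t)))}"

definition uprime :: "nat list \<Rightarrow> (nat \<times> nat) set" where
  "uprime c = {(i, j) \<in> mroots c. \<forall>a b. neighbouring c a b \<and> b \<noteq> length c - 1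
                                         \<longrightarrow> (i, j) \<in> uCC c a b}"

definition upi :: "nat list \<Rightarrow> (nat \<times> nat) set" where
  "upi c = {(i, j) \<in> mroots c. \<forall>a b. neighbouring c a b \<longrightarrow> (i, j) \<in> uCC c a b}"

definition Bk :: "nat list \<Rightarrow> (nat \<times> nat) set" where
  "Bk c = {(i, j). j \<in> set (col c (length c - 1)) \<and> i \<in> {1 .. sum_list c}
                   \<and> i \<notin> set (col c (length c - 1))}"

end

theory Submission
  imports Defs
begin

text \<open>In the shifted tableau for \<open>(C, C')\<close> the bottom part of each \<open>D\<^sub>i\<^sub>+\<^sub>1\<close> moves into \<open>D\<^sub>i\<close>
  and \<open>N\<close> moves from \<open>C'\<close> into \<open>D\<^sub>u\<close>; no entry moves to the right, and no column right of \<open>C'\<close>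
  changes. So if \<open>C' \<noteq> C\<^sub>k\<close>, every entry \<open>i \<notin> C\<^sub>k\<close> lies in a new column strictly left of
  \<open>C\<^sub>k\<close>, which is itself unchanged and read last; thus \<open>i\<close> precedes every \<open>j \<in> C\<^sub>k\<close> in
  \<open>w\<^sub>C\<^sub>,\<^sub>C\<^sub>'\<close>. If the height \<open>c\<^sub>k\<close> occurs only once, \<open>C\<^sub>k\<close> is never the right member of a
  neighbouring pair, so (ii) follows from (i).\<close>

lemma mem_col_iff:
  "x \<in> set (col c t) \<longleftrightarrow> sum_list (take t c) < x \<and> x \<le> sum_list (take t c) + c ! t"
  by (auto simp: col_def)

lemma sum_list_take_mono:
  fixes c :: "nat list"
  assumes "t \<le> t'"
  shows "sum_list (take t c) \<le> sum_list (take t' c)"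
proof -
  have "take t' c = take t c @ drop t (take t' c)"
    using assms by (metis append_take_drop_id min.absorb1 take_take)
  then show ?thesis by (metis le_add1 sum_list_append)
qed

lemma sum_list_take_Suc:
  "t < length c \<Longrightarrow> sum_list (take (Suc t) c) = sum_list (take t c) + c ! t"
  by (simp add: take_Suc_conv_app_nth)

lemma ex_col_containing:
  "1 \<le> i \<Longrightarrow> i \<le> sum_list c \<Longrightarrow> \<exists>t < length c. i \<in> set (col c t)"
proof (induction c rule: rev_induct)
  case Nil
  then show ?case by simp
next
  case (snoc x c)
  show ?case
  proof (cases "i \<le> sum_list c")
    case True
    then obtain t where "t < length c" "i \<in> set (col c t)" using snoc by auto
    then show ?thesis by (intro exI[of _ t]) (auto simp: mem_col_iff nth_append)
  next
    case False
    then show ?thesis using snoc.prems by (intro exI[of _ "length c"]) (auto simp: mem_col_iff)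
  qed
qed

lemma col_entry_less:
  assumes "t < t'" "t' < length c" "x \<in> set (col c t)" "y \<in> set (col c t')"
  shows "x < y"
proof -
  have "x \<le> sum_list (take (Suc t) c)"
    using assms by (simp add: mem_col_iff sum_list_take_Suc)
  also have "\<dots> \<le> sum_list (take t' c)" using assms by (intro sum_list_take_mono) simp
  also have "\<dots> < y" using assms by (simp add: mem_col_iff)
  finally show ?thesis .
qed

lemma occurs_before_append:
  assumes "x \<in> set xs" "y \<in> set ys"
  shows "occurs_before (xs @ ys) x y"
proof -
  obtain p q where "p < length xs" "xs ! p = x" "q < length ys" "ys ! q = y"
    using assms by (metis in_set_conv_nth)
  then show ?thesis unfolding occurs_before_def
    by (intro exI[of _ p] exI[of _ "length xs + q"]) (auto simp: nth_append)
qed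

lemma upt_split_at:
  "l \<le> t \<Longrightarrow> t < b \<Longrightarrow> [l..<b] = [l..<t] @ t # [Suc t..<b]"
  by (metis le_add_diff_inverse less_imp_le upt_add_eq_append upt_conv_Cons)

lemma last_marked_before:
  assumes "a < t"
  obtains m where "m = a \<or> (a < m \<and> p m)" "m < t" "filter p [Suc m..<t] = []"
proof -
  define A where "A = {a} \<union> {m. a < m \<and> m < t \<and> p m}"
  have "finite A" "A \<noteq> {}" unfolding A_def by (auto intro: finite_subset[of _ "{..t}"])
  then have mA: "Max A \<in> A" and max: "\<And>m. m \<in> A \<Longrightarrow> m \<le> Max A" by auto
  have "\<not> p x" if "x \<in> set [Suc (Max A)..<t]" for x
  proof
    assume "p x"
    with that mA have "x \<in> A" by (auto simp: A_def)
    with that max show False by fastforce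
  qed
  moreover have "Max A = a \<or> (a < Max A \<and> p (Max A))" "Max A < t" using mA assms by (auto simp: A_def)
  ultimately show ?thesis using that by (simp add: filter_empty_conv)
qed

lemma newcol_right: "newcol c a b b = butlast (col c b)"
  by (simp add: newcol_def)

lemma newcol_unchanged:
  "j \<noteq> b \<Longrightarrow> j \<noteq> a \<Longrightarrow> \<not> (a < j \<and> j < b \<and> c ! a < c ! j) \<Longrightarrow> newcol c a b j = col c j"
  by (auto simp: newcol_def Let_def)

lemma newcol_shifted:
  assumes "neighbouring c a b" "j = a \<or> (a < j \<and> j < b \<and> c ! a < c ! j)"
  shows "newcol c a b j =
    (let nxt = filter (\<lambda>m. c ! a < c ! m) [Suc j..<b] in
     if nxt = [] then take (c ! a) (col c j) @ [last (col c b)]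
     else take (c ! a) (col c j) @ drop (c ! a) (col c (hd nxt)))"
  using assms unfolding newcol_def neighbouring_def Let_def by auto

lemma newcol_receives_last:
  assumes nb: "neighbouring c a b"
  obtains m where "m < b" "last (col c b) \<in> set (newcol c a b m)"
proof -
  have "a < b" using nb by (simp add: neighbouring_def)
  then obtain m where m: "m = a \<or> (a < m \<and> c ! a < c ! m)" "m < b"
    "filter (\<lambda>m. c ! a < c ! m) [Suc m..<b] = []"
    using last_marked_before by blast
  then have "newcol c a b m = take (c ! a) (col c m) @ [last (col c b)]"
    using newcol_shifted[OF nb] by (auto simp: Let_def)
  then show ?thesis using that m by auto
qed

lemma newcol_receives_bottom:
  assumes nb: "neighbouring c a b" and t: "a < t" "t < b" "c ! a < c ! t"
  obtains m where "m < t" "set (drop (c ! a) (col c t)) \<subseteq> set (newcol c a b m)"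
proof -
  define p where "p = (\<lambda>m. c ! a < c ! m)"
  obtain m where m: "m = a \<or> (a < m \<and> p m)" "m < t" "filter p [Suc m..<t] = []"
    using last_marked_before[OF t(1)] by blast
  have "filter p [Suc m..<b] = t # filter p [Suc t..<b]"
    using upt_split_at[of "Suc m" t b] m t by (simp add: p_def)
  then have "newcol c a b m = take (c ! a) (col c m) @ drop (c ! a) (col c t)"
    using newcol_shifted[OF nb] m t by (auto simp: p_def Let_def)
  then show ?thesis using that m by auto
qed

lemma entry_in_newcol:
  assumes nb: "neighbouring c a b" and i: "i \<in> set (col c t)"
  shows "\<exists>j \<le> max t b. i \<in> set (newcol c a b j)"
proof -
  consider "t = b" | "t = a \<or> (a < t \<and> t < b \<and> c ! a < c ! t)"
    | "t \<noteq> b" "t \<noteq> a" "\<not> (a < t \<and> t < b \<and> c ! a < c ! t)"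
    by blast
  then show ?thesis
  proof cases
    case 1
    show ?thesis
    proof (cases "i = last (col c b)")
      case False
      with i 1 have "i \<in> set (newcol c a b b)"
        by (cases "col c b" rule: rev_cases) (auto simp: newcol_right)
      then show ?thesis using 1 by auto
    next
      case True
      obtain m where "m < b" "i \<in> set (newcol c a b m)"
        using newcol_receives_last[OF nb] True by blast
      then show ?thesis by (intro exI[of _ m]) auto
    qed
  next
    case 2
    have "i \<in> set (take (c ! a) (col c t)) \<or> i \<in> set (drop (c ! a) (col c t))"
      using i by (metis append_take_drop_id Un_iff set_append)
    then show ?thesis
    proof
      assume "i \<in> set (take (c ! a) (col c t))"
      then have "i \<in> set (newcol c a b t)"
        using newcol_shifted[OF nb 2] by (simp add: Let_def)
      then show ?thesis by (intro exI[of _ t]) auto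
    next
      assume drop: "i \<in> set (drop (c ! a) (col c t))"
      then have "t \<noteq> a" by (auto simp: col_def)
      with 2 obtain m where "m < t" "i \<in> set (newcol c a b m)"
        using newcol_receives_bottom[OF nb] drop by blast
      then show ?thesis by (intro exI[of _ m]) auto
    qed
  next
    case 3
    then have "newcol c a b t = col c t" by (intro newcol_unchanged) auto
    then show ?thesis using i by (intro exI[of _ t]) auto
  qed
qed

lemma word_last_col:
  assumes "neighbouring c a b" "b \<noteq> length c - 1"
  shows "word c a b = concat (map (\<lambda>j. rev (newcol c a b j)) [0..<length c - 1]) @ rev (col c (length c - 1))"
proof -
  have "b < length c - 1" "a < b" using assms by (auto simp: neighbouring_def)
  then have "newcol c a b (length c - 1) = col c (length c - 1)"
    by (intro newcol_unchanged) auto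
  moreover have "[0..<length c] = [0..<length c - 1] @ [length c - 1]"
    using \<open>b < length c - 1\<close> by (cases "length c") auto
  ultimately show ?thesis by (simp add: word_def)
qed

lemma Bk_memD:
  assumes "(i, j) \<in> Bk c" "c \<noteq> []"
  obtains t where "t < length c - 1" "i \<in> set (col c t)" "j \<in> set (col c (length c - 1))"
    "1 \<le> i" "i < j" "j \<le> sum_list c"
proof -
  define k where "k = length c - 1"
  have k: "k < length c" using assms(2) by (simp add: k_def)
  have ij: "j \<in> set (col c k)" "1 \<le> i" "i \<le> sum_list c" "i \<notin> set (col c k)"
    using assms(1) by (auto simp: Bk_def k_def)
  obtain t where t: "t < length c" "i \<in> set (col c t)" using ex_col_containing[OF ij(2,3)] by blast
  with ij(4) have "t < k" by (cases "t = k") (auto simp: k_def)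
  moreover have "i < j" using col_entry_less[OF \<open>t < k\<close> k t(2) ij(1)] .
  moreover have "j \<le> sum_list c"
    using ij(1) sum_list_take_Suc[OF k] k by (simp add: mem_col_iff k_def)
  ultimately show ?thesis using that t ij by (auto simp: k_def)
qed

lemma Bk_subset_mroots:
  assumes "c \<noteq> []"
  shows "Bk c \<subseteq> mroots c"
proof safe
  fix i j assume ij: "(i, j) \<in> Bk c"
  then obtain t where t: "t < length c - 1" "i \<in> set (col c t)"
    "j \<in> set (col c (length c - 1))" "1 \<le> i" "i < j" "j \<le> sum_list c"
    using Bk_memD assms by blast
  have "\<not> (i \<in> set (col c t') \<and> j \<in> set (col c t'))" if "t' < length c" for t'
  proof (cases "t' = length c - 1")
    case True
    with ij show ?thesis by (simp add: Bk_def)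
  next
    case False
    with that have "t' < length c - 1" by simp
    with t(3) col_entry_less[of t' "length c - 1" c j j] show ?thesis using assms by auto
  qed
  with t show "(i, j) \<in> mroots c" by (auto simp: mroots_def)
qed

lemma Bk_subset_uCC:
  assumes nb: "neighbouring c a b" and b: "b \<noteq> length c - 1"
  shows "Bk c \<subseteq> uCC c a b"
proof safe
  fix i j assume "(i, j) \<in> Bk c"
  moreover have "c \<noteq> []" using nb by (auto simp: neighbouring_def)
  ultimately obtain t where t: "t < length c - 1" "i \<in> set (col c t)"
    "j \<in> set (col c (length c - 1))" "1 \<le> i" "i < j" "j \<le> sum_list c"
    using Bk_memD by blast
  have "b < length c - 1" using nb b by (auto simp: neighbouring_def)
  with t(1) entry_in_newcol[OF nb t(2)]
  have "i \<in> set (concat (map (\<lambda>j. rev (newcol c a b j)) [0..<length c - 1]))"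
    by fastforce
  then have "occurs_before (word c a b) i j"
    unfolding word_last_col[OF nb b] using t(3) by (intro occurs_before_append) auto
  with t show "(i, j) \<in> uCC c a b" by (simp add: uCC_def)
qed

theorem lemma2p9:
  fixes c :: "nat list" and n :: nat
  assumes comp: "\<forall>x \<in> set c. 0 < x"
    and n_def: "n = sum_list c"
    and n2: "2 \<le> n"
  shows "(\<forall>a b. neighbouring c a b \<and> b \<noteq> length c - 1 \<longrightarrow> Bk c \<subseteq> uCC c a b)
         \<and> Bk c \<subseteq> uprime c
         \<and> ((\<forall>j < length c - 1. c ! j \<noteq> c ! (length c - 1)) \<longrightarrow> Bk c \<subseteq> upi c)"
proof -
  have "c \<noteq> []" using n_def n2 by auto
  then have m: "Bk c \<subseteq> mroots c" by (rule Bk_subset_mroots)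
  have unique: "b \<noteq> length c - 1"
    if "\<forall>j < length c - 1. c ! j \<noteq> c ! (length c - 1)" "neighbouring c a b" for a b
    using that by (auto simp: neighbouring_def)
  show ?thesis
    using Bk_subset_uCC m unique unfolding uprime_def upi_def by blast
qed

end
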